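(* If $\dfrac{\mathfrak{g}}{\sim}\subseteq\downarrow\mathfrak{Z}$, then ${\rm Eigen}(\sigma_{\varphi\restriction_{\frac{\mathfrak{g}}{\sim}},\mathfrak{w}^{\frac{\mathfrak{g}}{\sim}}},V^{\frac{\mathfrak{g}}{\sim}})\setminus\{0\}=\varnothing$.
   Context: $V$ is a vector space over a field $F$, $\Gamma$ a nonempty set, $\varphi:\Gamma\to\Gamma$ a self-map, and $\mathfrak{w}=(\mathfrak{w}_\alpha)_{\alpha\in\Gamma}\in F^\Gamma$. The weighted generalized shift is $\sigma_{\varphi,\mathfrak{w}}:V^\Gamma\to V^\Gamma$, $(x_\alpha)_{\alpha\in\Gamma}\mapsto(\mathfrak{w}_\alpha x_{\varphi(\alpha)})_{\alpha\in\Gamma}$. For nonempty $D\subseteq\Gamma$, $\mathfrak{w}^D:=(\mathfrak{w}_\alpha)_{\alpha\in D}$. $\mathfrak{Z}:=\{\alpha\in\Gamma:\mathfrak{w}_\alpha=0\}$ and $\downarrow\mathfrak{Z}:=\bigcup_{n\geq0}\varphi^{-n}(\mathfrak{Z})$. The relation $\sim$ on $\Gamma$ is defined by $\alpha\sim\beta$ iff there exist $n,m\geq1$ with $\varphi^n(\alpha)=\varphi^m(\beta)$; it is an equivalence relation, $\frac{\alpha}{\sim}$ denotes the equivalence class of $\alpha$ (which is mapped into itself by $\varphi$), and $\mathfrak{g}\in\Gamma$. For a linear map $T:W\to W$, ${\rm Eigen}(T,W)$ is the set of all $r\in F$ such that $T(x)=rx$ for some nonzero $x\in W$. *)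

theory Defs
  imports Main "HOL.Vector_Spaces"
begin

text \<open>V^D for D a subset of the index set: functions on the index type that vanish
  outside D (extensional representation of the product of copies of V over D).\<close>
definition prodspace :: "'g set \<Rightarrow> ('g \<Rightarrow> 'v::zero) set" where
  "prodspace D = {x. \<forall>\<alpha>. \<alpha> \<notin> D \<longrightarrow> x \<alpha> = 0}"

definition wgshift :: "('f \<Rightarrow> 'v \<Rightarrow> 'v) \<Rightarrow> ('g \<Rightarrow> 'g) \<Rightarrow> ('g \<Rightarrow> 'f) \<Rightarrow> 'g set
    \<Rightarrow> ('g \<Rightarrow> 'v::zero) \<Rightarrow> ('g \<Rightarrow> 'v)" where
  "wgshift scale \<phi> w D x = (\<lambda>\<alpha>. if \<alpha> \<in> D then scale (w \<alpha>) (x (\<phi> \<alpha>)) else 0)"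

definition Eigen :: "('f \<Rightarrow> 'v \<Rightarrow> 'v) \<Rightarrow> (('g \<Rightarrow> 'v) \<Rightarrow> ('g \<Rightarrow> 'v)) \<Rightarrow> ('g \<Rightarrow> 'v::zero) set \<Rightarrow> 'f set" where
  "Eigen scale T W = {r. \<exists>x\<in>W. x \<noteq> (\<lambda>_. 0) \<and> T x = (\<lambda>\<alpha>. scale r (x \<alpha>))}"

definition Zset :: "('g \<Rightarrow> 'f::zero) \<Rightarrow> 'g set" where
  "Zset w = {\<alpha>. w \<alpha> = 0}"

definition downZ :: "('g \<Rightarrow> 'g) \<Rightarrow> ('g \<Rightarrow> 'f::zero) \<Rightarrow> 'g set" where
  "downZ \<phi> w = (\<Union>n. {\<alpha>. (\<phi> ^^ n) \<alpha> \<in> Zset w})"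

definition gsim :: "('g \<Rightarrow> 'g) \<Rightarrow> 'g \<Rightarrow> 'g \<Rightarrow> bool" where
  "gsim \<phi> \<alpha> \<beta> \<longleftrightarrow> (\<exists>n m. n \<ge> 1 \<and> m \<ge> 1 \<and> (\<phi> ^^ n) \<alpha> = (\<phi> ^^ m) \<beta>)"

definition simclass :: "('g \<Rightarrow> 'g) \<Rightarrow> 'g \<Rightarrow> 'g set" where
  "simclass \<phi> \<alpha> = {\<beta>. gsim \<phi> \<alpha> \<beta>}"

end

theory Submission
  imports Defs
begin

text \<open>An eigenvector \<open>x\<close> for an eigenvalue \<open>r \<noteq> 0\<close> satisfies
  \<open>r x \<alpha> = w \<alpha> x (\<phi> \<alpha>)\<close> on \<open>D\<close>, so it vanishes at every zero of the weight and,
  going backwards along \<open>\<phi>\<close>, at every point of \<open>D\<close> one of whose iterates is such a zero.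
  If \<open>D\<close> is \<open>\<phi>\<close>-invariant and contained in \<open>downZ \<phi> w\<close>, no nonzero eigenvector is left.\<close>

lemma image_simclass_subset: "\<phi> ` simclass \<phi> g \<subseteq> simclass \<phi> g"
proof (rule image_subsetI)
  fix \<beta> assume "\<beta> \<in> simclass \<phi> g"
  then obtain n m where "n \<ge> 1" "m \<ge> 1" "(\<phi> ^^ n) g = (\<phi> ^^ m) \<beta>"
    by (auto simp: simclass_def gsim_def)
  then have "Suc n \<ge> 1" "m \<ge> 1" "(\<phi> ^^ Suc n) g = (\<phi> ^^ m) (\<phi> \<beta>)"
    by (simp_all add: funpow_swap1)
  then show "\<phi> \<beta> \<in> simclass \<phi> g"
    unfolding simclass_def gsim_def by blast
qed

lemma wgshift_eigenvector_vanishes_on_downZ: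
  fixes scale :: "'f::field \<Rightarrow> 'v::ab_group_add \<Rightarrow> 'v"
  assumes "vector_space scale"
    and invariant: "\<phi> ` D \<subseteq> D"
    and "r \<noteq> 0"
    and eigen: "wgshift scale \<phi> w D x = (\<lambda>\<alpha>. scale r (x \<alpha>))"
    and "\<alpha> \<in> D" "\<alpha> \<in> downZ \<phi> w"
  shows "x \<alpha> = 0"
proof -
  interpret vector_space scale by fact
  have step: "scale r (x \<beta>) = scale (w \<beta>) (x (\<phi> \<beta>))" if "\<beta> \<in> D" for \<beta>
    using fun_cong[OF eigen, of \<beta>] that by (simp add: wgshift_def)
  have "x \<beta> = 0" if "\<beta> \<in> D" "(\<phi> ^^ n) \<beta> \<in> Zset w" for n \<beta>
    using that
  proof (induction n arbitrary: \<beta>)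
    case 0
    then have "w \<beta> = 0" by (simp add: Zset_def)
    with step[OF "0.prems"(1)] \<open>r \<noteq> 0\<close> show ?case by simp
  next
    case (Suc n)
    have "\<phi> \<beta> \<in> D" using Suc.prems(1) invariant by blast
    moreover have "(\<phi> ^^ n) (\<phi> \<beta>) \<in> Zset w" using Suc.prems(2) by (simp add: funpow_swap1)
    ultimately have "x (\<phi> \<beta>) = 0" by (rule Suc.IH)
    with step[OF Suc.prems(1)] \<open>r \<noteq> 0\<close> show ?case by simp
  qed
  with \<open>\<alpha> \<in> D\<close> \<open>\<alpha> \<in> downZ \<phi> w\<close> show ?thesis by (auto simp: downZ_def)
qed

lemma Eigen_wgshift_subset_zero:
  fixes scale :: "'f::field \<Rightarrow> 'v::ab_group_add \<Rightarrow> 'v"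
  assumes "vector_space scale"
    and "\<phi> ` D \<subseteq> D"
    and "D \<subseteq> downZ \<phi> w"
  shows "Eigen scale (wgshift scale \<phi> w D) (prodspace D) \<subseteq> {0}"
proof
  fix r assume "r \<in> Eigen scale (wgshift scale \<phi> w D) (prodspace D)"
  then obtain x where x: "x \<in> prodspace D" "x \<noteq> (\<lambda>_. 0)"
    and eigen: "wgshift scale \<phi> w D x = (\<lambda>\<alpha>. scale r (x \<alpha>))"
    unfolding Eigen_def by blast
  show "r \<in> {0}"
  proof (rule ccontr)
    assume "r \<notin> {0}"
    then have "r \<noteq> 0" by simp
    have "x \<alpha> = 0" for \<alpha>
    proof (cases "\<alpha> \<in> D")
      case True
      with assms(3) have "\<alpha> \<in> downZ \<phi> w" by blast
      from wgshift_eigenvector_vanishes_on_downZ[OF assms(1,2) \<open>r \<noteq> 0\<close> eigen True this]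
      show ?thesis .
    next
      case False
      with x(1) show ?thesis by (simp add: prodspace_def)
    qed
    with x(2) show False by auto
  qed
qed

theorem corollary2p3:
  fixes scale :: "'f::field \<Rightarrow> 'v::ab_group_add \<Rightarrow> 'v"
    and \<phi> :: "'g \<Rightarrow> 'g" and w :: "'g \<Rightarrow> 'f" and g :: 'g
  assumes "vector_space scale"
    and "simclass \<phi> g \<subseteq> downZ \<phi> w"
  shows "Eigen scale (wgshift scale \<phi> w (simclass \<phi> g)) (prodspace (simclass \<phi> g)) - {0} = {}"
  using Eigen_wgshift_subset_zero[OF assms(1) image_simclass_subset assms(2)]
  by (simp only: Diff_eq_empty_iff)

end
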